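(* Under the setting below, let $(x^*,z^*,s^* )$ with multiplier $\lambda^*$ for (C) (and nonnegative multipliers for the other constraints) be a KKT point of (P). Then for every $t$ with $(\beta_t,\theta_t)\in\Omega^{I}_t(\lambda^* )$ we have $(x_t^*,z_t^* )=(1,0)$, where $\Omega^{I}_t(\lambda)=\Big\{(\beta,\theta):\beta>0,\ \theta>\frac{\beta c_t e_t'(c_t)+d_t\lambda}{u_t'(1)},\ \beta<\frac{p_tc_t+r_t\lambda}{c_te_t'(c_t)}\Big\}$.
   Context: Fix an integer $T\ge 1$, a data cap $Q>0$ and an overage fee $\pi>0$. For each $t\in\{1,\dots,T\}$ fix reals $d_t\ge 0$, $r_t\ge 0$, $c_t>0$, $p_t>0$, $\theta_t>0$, $\beta_t>0$ and functions $u_t,e_t:[0,\infty)\to\mathbb{R}$ such that: $u_t$ is continuous, increasing and strictly concave, differentiable on $(0,\infty)$, and $u_t':(0,\infty)\to(0,\infty)$ is a strictly decreasing bijection with inverse $u_t'^{-1}$; $e_t$ is increasing, strictly convex and continuously differentiable, and $e_t':[0,\infty)\to[0,\infty)$ is a strictly increasing bijection with inverse $e_t'^{-1}$. For $0\le z\le x\le 1$ let $\tilde f_t(x,z)=\theta_t u_t(x)-\beta_t e_t((x-z)c_t)-p_t c_t z$ and $\tilde h_t(x,z)=d_t x+r_t z$. Problem (P): maximize $\sum_{t=1}^T \tilde f_t(x_t,z_t)-\pi s$ over $x,z\in\mathbb{R}^T$, $s\in\mathbb{R}$, subject to $0\le z_t\le x_t\le 1$ for all $t$, $s\ge 0$,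 and (C): $s\ge \sum_{t=1}^T\tilde h_t(x_t,z_t)-Q$. A KKT point of (P) consists of a feasible $(x^*,z^*,s^* )$ and nonnegative Lagrange multipliers for all constraints satisfying stationarity of the Lagrangian and complementary slackness; $\lambda^*$ denotes the multiplier of (C) (the shadow price of wireless data). *)

theory Defs
  imports "HOL-Analysis.Analysis"
begin

definition strictly_convex_on :: "real set \<Rightarrow> (real \<Rightarrow> real) \<Rightarrow> bool" where
  "strictly_convex_on S f \<longleftrightarrow>
     (\<forall>x\<in>S. \<forall>y\<in>S. \<forall>a::real. x \<noteq> y \<and> 0 < a \<and> a < 1 \<longrightarrow>
        f ((1 - a) * x + a * y) < (1 - a) * f x + a * f y)"

definition strictly_concave_on :: "real set \<Rightarrow> (real \<Rightarrow> real) \<Rightarrow> bool" where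
  "strictly_concave_on S f \<longleftrightarrow> strictly_convex_on S (\<lambda>x. - f x)"

definition feasibleP ::
  "nat \<Rightarrow> real \<Rightarrow> (nat \<Rightarrow> real) \<Rightarrow> (nat \<Rightarrow> real) \<Rightarrow>
   (nat \<Rightarrow> real) \<Rightarrow> (nat \<Rightarrow> real) \<Rightarrow> real \<Rightarrow> bool" where
  "feasibleP T Q d r x z s \<longleftrightarrow>
     (\<forall>t\<in>{1..T}. 0 \<le> z t \<and> z t \<le> x t \<and> x t \<le> 1) \<and> 0 \<le> s \<and>
     s \<ge> (\<Sum>t=1..T. d t * x t + r t * z t) - Q"

text \<open>The Lagrangian (maximisation form) is
  sum f_t - pi s + sum mu1_t z_t + sum mu2_t (x_t - z_t) + sum mu3_t (1 - x_t) + nu s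
  - lambda (sum h_t - Q - s).
  up t is the derivative of u t on (0,inf), ep t the derivative of e t on [0,inf).
  Stationarity requires the gradient of the objective at the point, so x_t > 0.\<close>
definition KKT_point ::
  "nat \<Rightarrow> real \<Rightarrow> real \<Rightarrow> (nat \<Rightarrow> real) \<Rightarrow> (nat \<Rightarrow> real) \<Rightarrow> (nat \<Rightarrow> real) \<Rightarrow>
   (nat \<Rightarrow> real) \<Rightarrow> (nat \<Rightarrow> real) \<Rightarrow> (nat \<Rightarrow> real) \<Rightarrow>
   (nat \<Rightarrow> real \<Rightarrow> real) \<Rightarrow> (nat \<Rightarrow> real \<Rightarrow> real) \<Rightarrow>
   (nat \<Rightarrow> real) \<Rightarrow> (nat \<Rightarrow> real) \<Rightarrow> real \<Rightarrow>
   (nat \<Rightarrow> real) \<Rightarrow> (nat \<Rightarrow> real) \<Rightarrow> (nat \<Rightarrow> real) \<Rightarrow> real \<Rightarrow> real \<Rightarrow> bool" where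
  "KKT_point T Q \<pi> d r c p \<theta> \<beta> up ep x z s \<mu>1 \<mu>2 \<mu>3 \<nu> lam \<longleftrightarrow>
     feasibleP T Q d r x z s \<and>
     lam \<ge> 0 \<and> \<nu> \<ge> 0 \<and>
     (\<forall>t\<in>{1..T}. \<mu>1 t \<ge> 0 \<and> \<mu>2 t \<ge> 0 \<and> \<mu>3 t \<ge> 0) \<and>
     (\<forall>t\<in>{1..T}. x t > 0 \<and>
        \<theta> t * up t (x t) - \<beta> t * c t * ep t ((x t - z t) * c t)
          + \<mu>2 t - \<mu>3 t - lam * d t = 0 \<and>
        \<beta> t * c t * ep t ((x t - z t) * c t) - p t * c t
          + \<mu>1 t - \<mu>2 t - lam * r t = 0) \<and>
     - \<pi> + \<nu> + lam = 0 \<and>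
     (\<forall>t\<in>{1..T}. \<mu>1 t * z t = 0 \<and> \<mu>2 t * (x t - z t) = 0 \<and> \<mu>3 t * (1 - x t) = 0) \<and>
     \<nu> * s = 0 \<and>
     lam * (s - ((\<Sum>t=1..T. d t * x t + r t * z t) - Q)) = 0"

definition OmegaI ::
  "real \<Rightarrow> real \<Rightarrow> real \<Rightarrow> real \<Rightarrow> real \<Rightarrow> real \<Rightarrow> real \<Rightarrow> (real \<times> real) set" where
  "OmegaI ct dt rt pt ue1 ec lam =
     {(b, th). b > 0 \<and> th > (b * ct * ec + dt * lam) / ue1 \<and>
               b < (pt * ct + rt * lam) / (ct * ec)}"

end

theory Submission
  imports Defs
begin

text \<open>Inside the region \<Omega>-I the marginal congestion cost of offloading is below its price even
  at full offload, so the multiplier of z \<ge> 0 must be positive and z = 0; and the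
  marginal utility exceeds the marginal cost even at x = 1, so x < 1 would leave the
  x-stationarity equation with a positive residual.\<close>

lemma mem_OmegaI_iff_mult:
  assumes "ct * ec > 0" and "ue1 > 0"
  shows "(b, th) \<in> OmegaI ct dt rt pt ue1 ec lam \<longleftrightarrow>
           b > 0 \<and> th * ue1 > b * ct * ec + dt * lam \<and> b * (ct * ec) < pt * ct + rt * lam"
  using assms by (auto simp: OmegaI_def pos_less_divide_eq pos_divide_less_eq)

lemma strict_mono_le_on_nonneg:
  fixes g :: "real \<Rightarrow> real"
  assumes "\<And>a b. 0 \<le> a \<Longrightarrow> a < b \<Longrightarrow> g a < g b" and "0 \<le> a" and "a \<le> b"
  shows "g a \<le> g b"
  using assms by (cases "a = b") (auto intro: less_imp_le)

lemma offload_zero_if_cost_below_price: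
  fixes b c p r lam m1 m2 z C C1 :: real
  assumes stat: "b * c * C - p * c + m1 - m2 - lam * r = 0"
    and "m2 \<ge> 0" and "m1 * z = 0"
    and "b * c * C \<le> b * c * C1" and "b * c * C1 < p * c + r * lam"
  shows "z = 0"
proof -
  have "m1 > 0" using assms by (simp add: algebra_simps)
  then show ?thesis using \<open>m1 * z = 0\<close> by simp
qed

lemma demand_full_if_utility_above_cost:
  fixes \<theta> x lam d m2 m3 C C1 V V1 :: real
  assumes stat: "\<theta> * V - C + m2 - m3 - lam * d = 0"
    and "m2 * x = 0" and "m3 * (1 - x) = 0" and "0 < x" and "x \<le> 1" and "\<theta> > 0"
    and decr: "x < 1 \<Longrightarrow> V1 < V"
    and "C \<le> C1" and "\<theta> * V1 > C1 + d * lam"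
  shows "x = 1"
proof (rule ccontr)
  assume "x \<noteq> 1"
  with \<open>x \<le> 1\<close> have "x < 1" by simp
  with assms have "m2 = 0" and "m3 = 0" by simp_all
  have "\<theta> * V1 < \<theta> * V" using decr[OF \<open>x < 1\<close>] \<open>\<theta> > 0\<close> by simp
  with stat \<open>m2 = 0\<close> \<open>m3 = 0\<close> assms(8,9) show False by (simp add: algebra_simps)
qed

theorem lemma1:
  fixes T :: nat and Q \<pi> :: real
    and d r c p \<theta> \<beta> :: "nat \<Rightarrow> real"
    and u e up ep :: "nat \<Rightarrow> real \<Rightarrow> real"
    and x z \<mu>1 \<mu>2 \<mu>3 :: "nat \<Rightarrow> real" and s \<nu> lam :: real
  assumes "T \<ge> 1" and "Q > 0" and "\<pi> > 0"
    and params: "\<And>t. t \<in> {1..T} \<Longrightarrow>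
        d t \<ge> 0 \<and> r t \<ge> 0 \<and> c t > 0 \<and> p t > 0 \<and> \<theta> t > 0 \<and> \<beta> t > 0"
    and u_cont: "\<And>t. t \<in> {1..T} \<Longrightarrow> continuous_on {0..} (u t)"
    and u_incr: "\<And>t. t \<in> {1..T} \<Longrightarrow> mono_on {0..} (u t)"
    and u_conc: "\<And>t. t \<in> {1..T} \<Longrightarrow> strictly_concave_on {0..} (u t)"
    and u_deriv: "\<And>t y. t \<in> {1..T} \<Longrightarrow> y > 0 \<Longrightarrow> (u t has_real_derivative up t y) (at y)"
    and up_decr: "\<And>t a b. t \<in> {1..T} \<Longrightarrow> 0 < a \<Longrightarrow> a < b \<Longrightarrow> up t b < up t a"
    and up_bij: "\<And>t. t \<in> {1..T} \<Longrightarrow> bij_betw (up t) {0<..} {0<..}"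
    and e_incr: "\<And>t. t \<in> {1..T} \<Longrightarrow> mono_on {0..} (e t)"
    and e_conv: "\<And>t. t \<in> {1..T} \<Longrightarrow> strictly_convex_on {0..} (e t)"
    and e_deriv: "\<And>t y. t \<in> {1..T} \<Longrightarrow> y \<ge> 0 \<Longrightarrow>
        (e t has_real_derivative ep t y) (at y within {0..})"
    and ep_cont: "\<And>t. t \<in> {1..T} \<Longrightarrow> continuous_on {0..} (ep t)"
    and ep_incr: "\<And>t a b. t \<in> {1..T} \<Longrightarrow> 0 \<le> a \<Longrightarrow> a < b \<Longrightarrow> ep t a < ep t b"
    and ep_bij: "\<And>t. t \<in> {1..T} \<Longrightarrow> bij_betw (ep t) {0..} {0..}"
    and kkt: "KKT_point T Q \<pi> d r c p \<theta> \<beta> up ep x z s \<mu>1 \<mu>2 \<mu>3 \<nu> lam"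
  shows "\<forall>t\<in>{1..T}.
           (\<beta> t, \<theta> t) \<in> OmegaI (c t) (d t) (r t) (p t) (up t 1) (ep t (c t)) lam
           \<longrightarrow> x t = 1 \<and> z t = 0"
proof (intro ballI impI)
  fix t assume t: "t \<in> {1..T}"
    and om: "(\<beta> t, \<theta> t) \<in> OmegaI (c t) (d t) (r t) (p t) (up t 1) (ep t (c t)) lam"
  from params[OF t] have c: "c t > 0" and \<theta>: "\<theta> t > 0" and \<beta>: "\<beta> t > 0" by auto
  from kkt t have feas: "0 \<le> z t" "z t \<le> x t" "x t \<le> 1" "x t > 0"
    and mult: "\<mu>2 t \<ge> 0"
    and stat_x: "\<theta> t * up t (x t) - \<beta> t * c t * ep t ((x t - z t) * c t)
                   + \<mu>2 t - \<mu>3 t - lam * d t = 0"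
    and stat_z: "\<beta> t * c t * ep t ((x t - z t) * c t) - p t * c t
                   + \<mu>1 t - \<mu>2 t - lam * r t = 0"
    and slack: "\<mu>1 t * z t = 0" "\<mu>2 t * (x t - z t) = 0" "\<mu>3 t * (1 - x t) = 0"
    unfolding KKT_point_def feasibleP_def by auto
  have "up t 1 > 0" and "ep t 0 \<ge> 0"
    using up_bij[OF t] ep_bij[OF t] by (auto simp: bij_betw_def)
  then have "c t * ep t (c t) > 0" using ep_incr[OF t, of 0 "c t"] c by simp
  with om \<open>up t 1 > 0\<close> have region:
      "\<theta> t * up t 1 > \<beta> t * c t * ep t (c t) + d t * lam"
      "\<beta> t * (c t * ep t (c t)) < p t * c t + r t * lam"
    by (simp_all add: mem_OmegaI_iff_mult)
  have "(x t - z t) * c t \<le> c t" using feas c by (simp add: mult_le_cancel_right1)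
  then have "ep t ((x t - z t) * c t) \<le> ep t (c t)"
    using feas c by (intro strict_mono_le_on_nonneg[OF ep_incr[OF t]]) simp_all
  then have cost_le: "\<beta> t * c t * ep t ((x t - z t) * c t) \<le> \<beta> t * c t * ep t (c t)"
    using \<beta> c by simp
  have "z t = 0"
    using offload_zero_if_cost_below_price[OF stat_z mult slack(1) cost_le] region(2)
    by (simp add: mult.assoc)
  moreover have "x t = 1"
    using demand_full_if_utility_above_cost[OF stat_x _ slack(3) feas(4,3) \<theta> _ cost_le region(1)]
      slack(2) \<open>z t = 0\<close> up_decr[OF t feas(4)] by simp
  ultimately show "x t = 1 \<and> z t = 0" by simp
qed

end
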